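(* Let $r \ge 3$ be an integer. For $n \ge 1$ let $g^{\mathrm{ns}}_r(n) = \max\{|\mathcal{F}| : \mathcal{F} \subseteq \{0,1\}^n \text{ contains no near-sunflower of size } r\}$ and $g^{\mathrm{ff}}_r(n) = \max\{|\mathcal{F}| : \mathcal{F} \subseteq \{0,1\}^n \text{ contains no focal family of size } r\}$. Then: (a) for every $n$, $g^{\mathrm{ns}}_r(n) \le g^{\mathrm{ff}}_r(n) \le (r-1)\, 2^{\lceil \frac{(r-2)n}{r-1} \rceil}$; (b) there exist positive constants $c^{\mathrm{ns}}_r$ and $c^{\mathrm{ff}}_r$ (depending only on $r$) such that for every $n$, $g^{\mathrm{ns}}_r(n) \ge c^{\mathrm{ns}}_r \left(\frac{2}{(r+1)^{1/(r-1)}}\right)^n$ and $g^{\mathrm{ff}}_r(n) \ge c^{\mathrm{ff}}_r \left(\frac{2}{r^{1/(r-1)}}\right)^n$.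
   Context: Vectors in $\{0,1\}^n$ are identified with subsets of $[n]=\{1,\dots,n\}$. A family $\mathcal{H}$ of $r$ distinct subsets of $[n]$ is a near-sunflower of size $r$ if every $i \in [n]$ belongs to exactly $0$, $1$, $r-1$ or $r$ of the sets in $\mathcal{H}$. A family $x^{(0)}, x^{(1)}, \dots, x^{(r-1)}$ of $r$ distinct vectors in $\{0,1\}^n$ is focal (with focus $x^{(0)}$) if for every coordinate $i \in [n]$, at least $r-2$ of the $r-1$ entries $x^{(1)}_i, \dots, x^{(r-1)}_i$ are equal to $x^{(0)}_i$. A family $\mathcal{F}$ contains a focal family of size $r$ if some $r$ distinct members of $\mathcal{F}$, with some choice of one of them as focus, form a focal family. *)

theory Defs
  imports Complex_Main
begin

text \<open>Vectors in {0,1}^n are identified with subsets of [n] = {1..n}.\<close>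

definition near_sunflower :: "nat \<Rightarrow> nat \<Rightarrow> nat set set \<Rightarrow> bool" where
  "near_sunflower n r H \<longleftrightarrow> finite H \<and> card H = r \<and>
     (\<forall>i\<in>{1..n}. card {A\<in>H. i \<in> A} \<in> {0, 1, r - 1, r})"

definition focal_family :: "nat \<Rightarrow> nat \<Rightarrow> nat set set \<Rightarrow> nat set \<Rightarrow> bool" where
  "focal_family n r H x \<longleftrightarrow> finite H \<and> card H = r \<and> x \<in> H \<and>
     (\<forall>i\<in>{1..n}. card {y\<in>H - {x}. (i \<in> y) = (i \<in> x)} \<ge> r - 2)"

definition contains_near_sunflower :: "nat \<Rightarrow> nat \<Rightarrow> nat set set \<Rightarrow> bool" where
  "contains_near_sunflower n r F \<longleftrightarrow> (\<exists>H\<subseteq>F. near_sunflower n r H)"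

definition contains_focal :: "nat \<Rightarrow> nat \<Rightarrow> nat set set \<Rightarrow> bool" where
  "contains_focal n r F \<longleftrightarrow> (\<exists>H\<subseteq>F. \<exists>x. focal_family n r H x)"

definition g_ns :: "nat \<Rightarrow> nat \<Rightarrow> nat" where
  "g_ns r n = Max {card F | F. F \<subseteq> Pow {1..n} \<and> \<not> contains_near_sunflower n r F}"

definition g_ff :: "nat \<Rightarrow> nat \<Rightarrow> nat" where
  "g_ff r n = Max {card F | F. F \<subseteq> Pow {1..n} \<and> \<not> contains_focal n r F}"

end

theory Submission
  imports Defs "HOL-Library.FuncSet"
begin

text \<open>Upper bound: cut \<open>[n]\<close> into \<open>r - 1\<close> disjoint blocks of size \<open>\<lfloor>n / (r - 1)\<rfloor>\<close>.
  If every block admitted another member of \<open>F\<close> agreeing with \<open>x\<close> outside that block, these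
  \<open>r - 1\<close> variants together with \<open>x\<close> would form a focal family with focus \<open>x\<close>. Hence in a
  focal-free family every \<open>x\<close> is determined by a block index \<open>j\<close> and its restriction to the
  complement of block \<open>j\<close>, which gives at most \<open>(r - 1) 2^(n - \<lfloor>n / (r - 1)\<rfloor>)\<close> members.

  Lower bounds: in a near-sunflower (focal family) every coordinate has a majority bit from which
  at most one member (at most one member other than the focus) deviates, so such families are
  encoded by choosing a bit and a deviant index in \<open>{0..r}\<close> (\<open>{0..r - 1}\<close>) per coordinate:
  there are at most \<open>(2(r + 1))^n\<close> (\<open>(2r)^n\<close>) of them. The deletion method then yields a free
  family of size \<open>\<ge> m - (2a)^n (m / 2^n)^r\<close>, and \<open>m \<approx> (2 / a^(1/(r-1)))^n / 2\<close> optimises this.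
  Finally focal families are near-sunflowers, so \<open>g_ns \<le> g_ff\<close>.\<close>

section \<open>The deletion method\<close>

lemma card_supersets_with_card:
  assumes "finite U" "e \<subseteq> U" "card e = r" "r \<le> m"
  shows "card {S. S \<subseteq> U \<and> card S = m \<and> e \<subseteq> S} = (card U - r) choose (m - r)"
proof -
  have fin_e: "finite e" using assms finite_subset by blast
  have "bij_betw (\<lambda>S. S - e) {S. S \<subseteq> U \<and> card S = m \<and> e \<subseteq> S} {T. T \<subseteq> U - e \<and> card T = m - r}"
  proof (rule bij_betwI[where g = "\<lambda>T. T \<union> e"])
    show "(\<lambda>T. T \<union> e) \<in> {T. T \<subseteq> U - e \<and> card T = m - r} \<rightarrow> {S. S \<subseteq> U \<and> card S = m \<and> e \<subseteq> S}"
    proof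
      fix T assume T: "T \<in> {T. T \<subseteq> U - e \<and> card T = m - r}"
      then have "finite T" "T \<inter> e = {}" using assms(1) finite_subset by auto
      then have "card (T \<union> e) = m" using T assms fin_e by (simp add: card_Un_disjoint)
      then show "T \<union> e \<in> {S. S \<subseteq> U \<and> card S = m \<and> e \<subseteq> S}" using T assms by auto
    qed
  qed (use assms fin_e in \<open>auto simp: card_Diff_subset\<close>)
  then have "card {S. S \<subseteq> U \<and> card S = m \<and> e \<subseteq> S} = card (U - e) choose (m - r)"
    using assms by (simp add: bij_betw_same_card n_subsets)
  then show ?thesis using assms fin_e by (simp add: card_Diff_subset)
qed

lemma ex_le_average:
  fixes f :: "'a \<Rightarrow> nat"
  assumes "finite A" "A \<noteq> {}"
  shows "\<exists>x\<in>A. f x * card A \<le> sum f A"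
proof (rule ccontr)
  assume "\<not> ?thesis"
  then have "(\<Sum>x\<in>A. sum f A) < (\<Sum>x\<in>A. f x * card A)"
    using assms by (intro sum_strict_mono) auto
  then show False by (simp add: sum_distrib_left[symmetric] mult.commute)
qed

lemma choose_Suc_mult_Suc: "(k choose Suc r) * Suc r = (k choose r) * (k - r)"
  by (metis binomial_absorb_comp binomial_absorption diff_Suc_1 mult.commute)

lemma choose_mult_power_le:
  fixes m N r :: nat
  assumes "m \<le> N"
  shows "(m choose r) * N ^ r \<le> (N choose r) * m ^ r"
proof (induction r)
  case 0
  then show ?case by simp
next
  case (Suc r)
  have "N * m - N * r \<le> N * m - m * r"
    using assms by (intro diff_le_mono2) simp
  then have "(m - r) * N \<le> (N - r) * m"
    by (simp add: algebra_simps diff_mult_distrib diff_mult_distrib2)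
  with Suc.IH have "((m choose r) * N ^ r) * ((m - r) * N) \<le> ((N choose r) * m ^ r) * ((N - r) * m)"
    by (rule mult_le_mono)
  moreover have "(k choose Suc r) * M ^ Suc r * Suc r = ((k choose r) * M ^ r) * ((k - r) * M)"
    for k M :: nat
  proof -
    have "(k choose Suc r) * M ^ Suc r * Suc r = ((k choose Suc r) * Suc r) * (M ^ r * M)"
      by (simp only: power_Suc2 mult_ac)
    also have "\<dots> = ((k choose r) * (k - r)) * (M ^ r * M)"
      by (simp only: choose_Suc_mult_Suc)
    finally show ?thesis by (simp only: mult_ac)
  qed
  ultimately have "((m choose Suc r) * N ^ Suc r) * Suc r \<le> ((N choose Suc r) * m ^ Suc r) * Suc r"
    by simp
  then show ?case unfolding mult_le_cancel2 by blast
qed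

lemma ex_subset_few_edges_inside:
  assumes U: "finite U" and B: "B \<subseteq> Pow U" and card_B: "\<forall>e\<in>B. card e = r"
    and rm: "r \<le> m" and mU: "m \<le> card U"
  shows "\<exists>S\<subseteq>U. card S = m \<and> card {e\<in>B. e \<subseteq> S} * (card U choose r) \<le> card B * (m choose r)"
proof -
  define N where "N = card U"
  define SS where "SS = {S. S \<subseteq> U \<and> card S = m}"
  have fin_B: "finite B" using B U by (meson finite_Pow_iff finite_subset)
  have fin_SS: "finite SS" unfolding SS_def using U by simp
  have card_SS: "card SS = N choose m" unfolding SS_def N_def using U by (simp add: n_subsets)
  have "(\<Sum>S\<in>SS. card {e\<in>B. e \<subseteq> S}) = (\<Sum>e\<in>B. card {S\<in>SS. e \<subseteq> S})"
    using sum.swap_restrict[OF fin_SS fin_B, of "\<lambda>_ _. 1::nat" "\<lambda>S e. e \<subseteq> S"] by simp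
  also have "\<dots> = (\<Sum>e\<in>B. (N - r) choose (m - r))"
  proof (rule sum.cong)
    fix e assume "e \<in> B"
    moreover have "{S\<in>SS. e \<subseteq> S} = {S. S \<subseteq> U \<and> card S = m \<and> e \<subseteq> S}" unfolding SS_def by auto
    ultimately show "card {S\<in>SS. e \<subseteq> S} = (N - r) choose (m - r)"
      using card_supersets_with_card[OF U _ _ rm, of e] B card_B N_def by auto
  qed simp
  finally have double_count: "(\<Sum>S\<in>SS. card {e\<in>B. e \<subseteq> S}) = card B * ((N - r) choose (m - r))"
    by simp
  have "SS \<noteq> {}" using card_SS mU N_def by auto
  then obtain S where S: "S \<in> SS" "card {e\<in>B. e \<subseteq> S} * (N choose m) \<le> card B * ((N - r) choose (m - r))"
    using ex_le_average[OF fin_SS, of "\<lambda>S. card {e\<in>B. e \<subseteq> S}"] double_count card_SS by auto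
  have choose_eq: "(N choose r) * ((N - r) choose (m - r)) = (N choose m) * (m choose r)"
    using choose_mult[OF rm, of N] mU N_def by simp
  have "(card {e\<in>B. e \<subseteq> S} * (N choose r)) * ((N - r) choose (m - r))
      = (card {e\<in>B. e \<subseteq> S} * (N choose m)) * (m choose r)"
    by (simp only: mult.assoc choose_eq)
  also have "\<dots> \<le> (card B * ((N - r) choose (m - r))) * (m choose r)"
    using S(2) by (rule mult_le_mono1)
  also have "\<dots> = (card B * (m choose r)) * ((N - r) choose (m - r))"
    by (simp only: mult_ac)
  finally have "(card {e\<in>B. e \<subseteq> S} * (N choose r)) * ((N - r) choose (m - r))
      \<le> (card B * (m choose r)) * ((N - r) choose (m - r))" .
  moreover have "0 < (N - r) choose (m - r)" using mU rm N_def by simp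
  ultimately show ?thesis using S(1) unfolding SS_def N_def by auto
qed

lemma ex_subset_avoiding_edges:
  assumes "finite S" "finite E" "{} \<notin> E"
  shows "\<exists>F\<subseteq>S. (\<forall>e\<in>E. \<not> e \<subseteq> F) \<and> card S - card E \<le> card F"
proof -
  define F where "F = S - (\<lambda>e. SOME x. x \<in> e) ` E"
  have "card S - card ((\<lambda>e. SOME x. x \<in> e) ` E) \<le> card F"
    unfolding F_def by (rule diff_card_le_card_Diff) (use assms in simp)
  then have "card S - card E \<le> card F"
    using card_image_le[OF assms(2), of "\<lambda>e. SOME x. x \<in> e"] by linarith
  moreover have "\<not> e \<subseteq> F" if "e \<in> E" for e
  proof -
    have "e \<noteq> {}" using that assms(3) by blast
    then have "(SOME x. x \<in> e) \<in> e" by (simp add: some_in_eq)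
    then show ?thesis using that unfolding F_def by blast
  qed
  ultimately show ?thesis unfolding F_def by blast
qed

text \<open>Some \<open>m\<close>-subset of the vertices spans at most the average number of edges, and deleting
  one vertex from each of them leaves an independent set.\<close>

lemma ex_large_independent_set:
  fixes U :: "'a set" and B :: "'a set set"
  assumes U: "finite U" and B: "B \<subseteq> Pow U" and card_B: "\<forall>e\<in>B. card e = r" and "r \<ge> 1"
    and mU: "m \<le> card U"
  shows "\<exists>F\<subseteq>U. (\<forall>e\<in>B. \<not> e \<subseteq> F) \<and>
           real m - real (card B) * (real m / real (card U)) ^ r \<le> real (card F)"
proof (cases "r \<le> m")
  case False
  obtain S where S: "S \<subseteq> U" "card S = m" using obtain_subset_with_card_n[OF mU] by metis
  have "\<not> e \<subseteq> S" if "e \<in> B" for e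
    using that card_mono[of S e] S U card_B False finite_subset by fastforce
  then show ?thesis using S by (intro exI[of _ S]) auto
next
  case True
  define N where "N = card U"
  obtain S where S: "S \<subseteq> U" "card S = m"
    and few: "card {e\<in>B. e \<subseteq> S} * (N choose r) \<le> card B * (m choose r)"
    using ex_subset_few_edges_inside[OF U B card_B True mU] unfolding N_def by blast
  have "card {e\<in>B. e \<subseteq> S} * (N choose r) * N ^ r \<le> card B * ((m choose r) * N ^ r)"
    using mult_le_mono1[OF few, of "N ^ r"] by (simp only: mult_ac)
  also have "\<dots> \<le> card B * ((N choose r) * m ^ r)"
    using choose_mult_power_le[of m N r] mU N_def by simp
  finally have "(card {e\<in>B. e \<subseteq> S} * N ^ r) * (N choose r) \<le> (card B * m ^ r) * (N choose r)"
    by (simp add: mult_ac)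
  moreover have "0 < N choose r" "0 < N" using mU True \<open>r \<ge> 1\<close> N_def by auto
  ultimately have "card {e\<in>B. e \<subseteq> S} * N ^ r \<le> card B * m ^ r"
    unfolding mult_le_cancel2 by blast
  then have "real (card {e\<in>B. e \<subseteq> S}) * real N ^ r \<le> real (card B) * real m ^ r"
    by (metis of_nat_le_iff of_nat_mult of_nat_power)
  then have few_real: "real (card {e\<in>B. e \<subseteq> S}) \<le> real (card B) * (real m / real N) ^ r"
    using \<open>0 < N\<close> by (simp add: power_divide field_simps)
  have fin_S: "finite S" using S U finite_subset by blast
  have "{} \<notin> B" using card_B \<open>r \<ge> 1\<close> by force
  then obtain F where F: "F \<subseteq> S" "\<forall>e\<in>{e\<in>B. e \<subseteq> S}. \<not> e \<subseteq> F"
    and "card S - card {e\<in>B. e \<subseteq> S} \<le> card F"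
    using ex_subset_avoiding_edges[OF fin_S, of "{e\<in>B. e \<subseteq> S}"] fin_S by auto
  then have "real m - real (card {e\<in>B. e \<subseteq> S}) \<le> real (card F)" using S by linarith
  moreover have "\<forall>e\<in>B. \<not> e \<subseteq> F" using F by blast
  ultimately show ?thesis using F S few_real unfolding N_def by (intro exI[of _ F]) auto
qed

lemma deletion_parameter_bounds:
  fixes a :: real and r n :: nat
  assumes a: "a \<ge> 1" and r: "r \<ge> 3"
  defines "\<beta> \<equiv> 2 / a powr (1 / real (r - 1))"
  defines "m \<equiv> nat \<lfloor>\<beta> ^ n / 2\<rfloor>"
  shows "m \<le> 2 ^ n" "(2 * a) ^ n * (real m / 2 ^ n) ^ r \<le> real m / 4" "\<beta> ^ n \<le> 2 * real m + 2"
proof -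
  define s where "s = a powr (1 / real (r - 1))"
  have s1: "s \<ge> 1" unfolding s_def using a r by (simp add: ge_one_powr_ge_zero)
  have s_power: "s ^ (r - 1) = a"
    unfolding s_def using a r by (simp add: powr_realpow[symmetric] powr_powr)
  have \<beta>_power: "\<beta> ^ n = 2 ^ n / s ^ n" unfolding \<beta>_def s_def[symmetric] by (simp add: power_divide)
  have m_eq: "real m = of_int \<lfloor>\<beta> ^ n / 2\<rfloor>" unfolding m_def using \<beta>_power s1 by simp
  have m_le: "real m \<le> \<beta> ^ n / 2" unfolding m_eq by (rule of_int_floor_le)
  have "\<beta> ^ n / 2 \<le> real m + 1" unfolding m_eq using floor_correct[of "\<beta> ^ n / 2"] by simp
  then show "\<beta> ^ n \<le> 2 * real m + 2" by linarith
  have "\<beta> ^ n \<le> 2 ^ n" unfolding \<beta>_power using s1 by (simp add: divide_le_eq mult_le_cancel_left1)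
  then have "real m \<le> 2 ^ n" using m_le zero_le_power[of "2::real" n] by linarith
  then show "m \<le> 2 ^ n" by (metis of_nat_le_iff of_nat_numeral of_nat_power)
  define t where "t = real m / 2 ^ n"
  have t_le: "t \<le> 1 / (2 * s ^ n)" unfolding t_def using m_le \<beta>_power s1 by (simp add: field_simps)
  have "(2 * a) ^ n * t ^ r = (2 * a) ^ n * t ^ (r - 1) * t"
    using r power_minus_mult[of r t] by (simp add: mult.assoc)
  also have "\<dots> \<le> (2 * a) ^ n * (1 / (2 * s ^ n)) ^ (r - 1) * t"
    using t_le a unfolding t_def by (intro mult_right_mono mult_left_mono power_mono) auto
  also have "(1 / (2 * s ^ n)) ^ (r - 1) = 1 / (2 ^ (r - 1) * a ^ n)"
    by (simp add: power_mult_distrib power_divide s_power[symmetric] power_mult[symmetric] mult.commute)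
  also have "(2 * a) ^ n * (1 / (2 ^ (r - 1) * a ^ n)) * t = real m / 2 ^ (r - 1)"
    unfolding t_def using a by (simp add: power_mult_distrib field_simps)
  also have "\<dots> \<le> real m / 4"
    using power_increasing[of 2 "r - 1" "2::real"] r by (intro divide_left_mono) auto
  finally show "(2 * a) ^ n * (real m / 2 ^ n) ^ r \<le> real m / 4" unfolding t_def .
qed

lemma exponential_lower_bound:
  fixes g :: "nat \<Rightarrow> nat" and a :: real
  assumes a: "a \<ge> 1" and r: "r \<ge> 3" and g_pos: "\<And>n. g n \<ge> 1"
    and deletion: "\<And>n m. m \<le> 2 ^ n \<Longrightarrow> real m - (2 * a) ^ n * (real m / 2 ^ n) ^ r \<le> real (g n)"
  shows "\<exists>c>0. \<forall>n\<ge>1. real (g n) \<ge> c * (2 / a powr (1 / real (r - 1))) ^ n"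
proof (intro exI[of _ "3/16"] conjI allI impI)
  \<comment> \<open>\<open>g n \<ge> max 1 (3 m / 4)\<close> and \<open>\<beta>^n \<le> 2 m + 2\<close> give \<open>g n \<ge> 3 \<beta>^n / 16\<close>.\<close>
  fix n :: nat
  define \<beta> where "\<beta> = 2 / a powr (1 / real (r - 1))"
  define m where "m = nat \<lfloor>\<beta> ^ n / 2\<rfloor>"
  have m: "m \<le> 2 ^ n" "(2 * a) ^ n * (real m / 2 ^ n) ^ r \<le> real m / 4" "\<beta> ^ n \<le> 2 * real m + 2"
    using deletion_parameter_bounds[OF a r, of n] unfolding \<beta>_def m_def by auto
  have "real m - real m / 4 \<le> real (g n)" using deletion[OF m(1)] m(2) by linarith
  moreover have "1 \<le> real (g n)" using g_pos[of n] by simp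
  ultimately show "3 / 16 * \<beta> ^ n \<le> real (g n)" using m(3) by linarith
qed simp

section \<open>Counting near-sunflowers and focal families\<close>

text \<open>A pattern \<open>p\<close> assigns to every coordinate \<open>i\<close> a default bit and the index of the one
  member (\<open>0\<close> for none) whose entry at \<open>i\<close> is flipped; \<open>pattern_member n p j\<close> is the
  \<open>j\<close>-th member described by \<open>p\<close>.\<close>

definition pattern_member :: "nat \<Rightarrow> (nat \<Rightarrow> bool \<times> nat) \<Rightarrow> nat \<Rightarrow> nat set" where
  "pattern_member n p j = {i\<in>{1..n}. fst (p i) \<noteq> (snd (p i) = j)}"

lemma ex_deviant_index:
  assumes h: "inj_on h I" and "0 \<notin> I" "J \<subseteq> I"
    and D: "finite D" "card D \<le> 1" "D \<subseteq> h ` J"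
  shows "\<exists>d\<in>insert 0 J. \<forall>j\<in>I. d = j \<longleftrightarrow> h j \<in> D"
proof (cases "D = {}")
  case True
  then show ?thesis using \<open>0 \<notin> I\<close> by auto
next
  case False
  then obtain A where "A \<in> D" by blast
  then have "D = {A}" using D(1,2) by (auto simp: card_le_Suc0_iff_eq)
  moreover obtain j0 where "j0 \<in> J" "A = h j0" using \<open>A \<in> D\<close> D(3) by blast
  moreover have "j0 = j \<longleftrightarrow> h j = h j0" if "j \<in> I" for j
    using inj_onD[OF h, of j j0] that \<open>j0 \<in> J\<close> \<open>J \<subseteq> I\<close> by blast
  ultimately show ?thesis by (intro bexI[of _ j0]) auto
qed

lemma ex_pattern_enumeration:
  assumes h: "bij_betw h I H" and "0 \<notin> I" "J \<subseteq> I" and H: "H \<subseteq> Pow {1..n}" "finite H"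
    and almost_constant:
      "\<forall>i\<in>{1..n}. \<exists>b. card {A\<in>H. (i \<in> A) \<noteq> b} \<le> 1 \<and> {A\<in>H. (i \<in> A) \<noteq> b} \<subseteq> h ` J"
  shows "\<exists>p\<in>{1..n} \<rightarrow>\<^sub>E UNIV \<times> insert 0 J. H = pattern_member n p ` I"
proof -
  obtain b where b: "\<forall>i\<in>{1..n}.
      card {A\<in>H. (i \<in> A) \<noteq> b i} \<le> 1 \<and> {A\<in>H. (i \<in> A) \<noteq> b i} \<subseteq> h ` J"
    using bchoice[OF almost_constant] by blast
  define D where "D i = {A\<in>H. (i \<in> A) \<noteq> b i}" for i
  have "\<forall>i\<in>{1..n}. \<exists>d. d \<in> insert 0 J \<and> (\<forall>j\<in>I. d = j \<longleftrightarrow> h j \<in> D i)"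
  proof
    fix i assume "i \<in> {1..n}"
    have "finite (D i)" using H(2) unfolding D_def by simp
    moreover have "card (D i) \<le> 1 \<and> D i \<subseteq> h ` J" using b \<open>i \<in> {1..n}\<close> unfolding D_def by blast
    ultimately have "\<exists>d\<in>insert 0 J. \<forall>j\<in>I. d = j \<longleftrightarrow> h j \<in> D i"
      by (intro ex_deviant_index[OF bij_betw_imp_inj_on[OF h] \<open>0 \<notin> I\<close> \<open>J \<subseteq> I\<close>]) simp_all
    then show "\<exists>d. d \<in> insert 0 J \<and> (\<forall>j\<in>I. d = j \<longleftrightarrow> h j \<in> D i)" by (simp only: Bex_def)
  qed
  then obtain d where d: "\<forall>i\<in>{1..n}. d i \<in> insert 0 J \<and> (\<forall>j\<in>I. d i = j \<longleftrightarrow> h j \<in> D i)"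
    by (rule bchoice[THEN exE])
  define p where "p = restrict (\<lambda>i. (b i, d i)) {1..n}"
  have "p \<in> {1..n} \<rightarrow>\<^sub>E UNIV \<times> insert 0 J" unfolding p_def restrict_PiE_iff using d by blast
  moreover have "pattern_member n p j = h j" if "j \<in> I" for j
  proof -
    have "h j \<in> H" using h that by (auto simp: bij_betw_def)
    have "i \<in> pattern_member n p j \<longleftrightarrow> i \<in> h j" if "i \<in> {1..n}" for i
    proof -
      have "d i = j \<longleftrightarrow> h j \<in> D i" using d that \<open>j \<in> I\<close> by blast
      then show ?thesis using that \<open>h j \<in> H\<close> unfolding pattern_member_def p_def D_def by auto
    qed
    moreover have "h j \<subseteq> {1..n}" using \<open>h j \<in> H\<close> H(1) by blast
    ultimately show ?thesis unfolding pattern_member_def by blast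
  qed
  then have "H = pattern_member n p ` I" using h unfolding bij_betw_def by auto
  ultimately show ?thesis by blast
qed

lemma card_le_patterns:
  assumes "\<forall>H\<in>\<H>. \<exists>p\<in>{1..n} \<rightarrow>\<^sub>E UNIV \<times> K. H = pattern_member n p ` I" and "finite K"
  shows "card \<H> \<le> (2 * card K) ^ n"
proof -
  have "\<H> \<subseteq> (\<lambda>p. pattern_member n p ` I) ` ({1..n} \<rightarrow>\<^sub>E UNIV \<times> K)" using assms by blast
  then have "card \<H> \<le> card ((\<lambda>p. pattern_member n p ` I) ` ({1..n} \<rightarrow>\<^sub>E (UNIV::bool set) \<times> K))"
    using assms by (intro card_mono) (auto intro!: finite_PiE)
  also have "\<dots> \<le> card ({1..n} \<rightarrow>\<^sub>E (UNIV::bool set) \<times> K)"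
    by (rule card_image_le) (auto intro!: finite_PiE assms)
  also have "\<dots> = (2 * card K) ^ n" by (simp add: card_PiE card_cartesian_product)
  finally show ?thesis .
qed

lemma card_filter_add_card_filter_not:
  "finite A \<Longrightarrow> card {x\<in>A. P x} + card {x\<in>A. \<not> P x} = card A"
  by (subst card_Un_disjoint[symmetric]) (auto intro: arg_cong[where f = card])

lemma near_sunflower_almost_constant:
  assumes "near_sunflower n r H" "i \<in> {1..n}"
  shows "\<exists>b. card {A\<in>H. (i \<in> A) \<noteq> b} \<le> 1"
proof -
  have fin: "finite H" and card_H: "card H = r"
    and count: "card {A\<in>H. i \<in> A} \<in> {0, 1, r - 1, r}"
    using assms unfolding near_sunflower_def by blast+
  have split: "card {A\<in>H. i \<in> A} + card {A\<in>H. i \<notin> A} = r"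
    using card_filter_add_card_filter_not[OF fin] card_H by simp
  show ?thesis
  proof (cases "card {A\<in>H. i \<in> A} \<le> 1")
    case True
    then show ?thesis by (intro exI[of _ False]) simp
  next
    case False
    then have "card {A\<in>H. i \<in> A} \<ge> r - 1" using count by auto
    then have "card {A\<in>H. i \<notin> A} \<le> 1" using split by linarith
    then show ?thesis by (intro exI[of _ True]) simp
  qed
qed

lemma focal_family_deviants_le_1:
  assumes "focal_family n r H x" "i \<in> {1..n}"
  shows "card {A\<in>H. (i \<in> A) \<noteq> (i \<in> x)} \<le> 1"
proof -
  have fin: "finite H" and card_H: "card H = r" and "x \<in> H"
    and agree: "card {A\<in>H - {x}. (i \<in> A) = (i \<in> x)} \<ge> r - 2"
    using assms unfolding focal_family_def by auto
  have "card {A\<in>H - {x}. (i \<in> A) = (i \<in> x)} + card {A\<in>H - {x}. \<not> ((i \<in> A) = (i \<in> x))}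
      = card (H - {x})"
    by (rule card_filter_add_card_filter_not) (use fin in simp)
  moreover have "card (H - {x}) = r - 1" using fin card_H \<open>x \<in> H\<close> by simp
  moreover have "{A\<in>H. (i \<in> A) \<noteq> (i \<in> x)} = {A\<in>H - {x}. \<not> ((i \<in> A) = (i \<in> x))}" by auto
  ultimately show ?thesis using agree by simp
qed

lemma near_sunflower_if_focal_family:
  assumes "focal_family n r H x"
  shows "near_sunflower n r H"
proof -
  have fin: "finite H" and card_H: "card H = r"
    using assms unfolding focal_family_def by auto
  have "card {A\<in>H. i \<in> A} \<in> {0, 1, r - 1, r}" if i: "i \<in> {1..n}" for i
  proof (cases "i \<in> x")
    case True
    have "card {A\<in>H. i \<in> A} + card {A\<in>H. i \<notin> A} = r"
      using card_filter_add_card_filter_not[OF fin] card_H by simp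
    moreover have "card {A\<in>H. i \<notin> A} \<le> 1"
      using focal_family_deviants_le_1[OF assms i] True by simp
    ultimately show ?thesis by auto
  next
    case False
    then show ?thesis using focal_family_deviants_le_1[OF assms i] by auto
  qed
  then show ?thesis unfolding near_sunflower_def using fin card_H by blast
qed

lemma card_near_sunflowers_le:
  "card {H. H \<subseteq> Pow {1..n} \<and> near_sunflower n r H} \<le> (2 * (r + 1)) ^ n"
proof -
  have "\<exists>p\<in>{1..n} \<rightarrow>\<^sub>E UNIV \<times> {0..r}. H = pattern_member n p ` {1..r}"
    if H: "H \<subseteq> Pow {1..n}" and ns: "near_sunflower n r H" for H
  proof -
    have fin: "finite H" "card H = r" using ns unfolding near_sunflower_def by auto
    obtain h where h: "bij_betw h {1..r} H" using ex_bij_betw_nat_finite_1[OF fin(1)] fin(2) by auto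
    have "\<forall>i\<in>{1..n}. \<exists>b. card {A\<in>H. (i \<in> A) \<noteq> b} \<le> 1 \<and> {A\<in>H. (i \<in> A) \<noteq> b} \<subseteq> h ` {1..r}"
      using near_sunflower_almost_constant[OF ns] bij_betw_imp_surj_on[OF h] by blast
    then have "\<exists>p\<in>{1..n} \<rightarrow>\<^sub>E UNIV \<times> insert 0 {1..r}. H = pattern_member n p ` {1..r}"
      using ex_pattern_enumeration[OF h _ order_refl H fin(1)] by simp
    moreover have "insert 0 {1..r} = {0..r}" by auto
    ultimately show ?thesis by simp
  qed
  then show ?thesis using card_le_patterns[of _ n "{0..r}" "{1..r}"] by simp
qed

lemma card_focal_families_le:
  assumes "r \<ge> 1"
  shows "card {H. H \<subseteq> Pow {1..n} \<and> (\<exists>x. focal_family n r H x)} \<le> (2 * r) ^ n"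
proof -
  have "\<exists>p\<in>{1..n} \<rightarrow>\<^sub>E UNIV \<times> {0..r - 1}. H = pattern_member n p ` {1..r}"
    if H: "H \<subseteq> Pow {1..n}" and ff: "focal_family n r H x" for H x
  proof -
    have fin: "finite H" "card H = r" "x \<in> H" using ff unfolding focal_family_def by auto
    then obtain h where h: "bij_betw h {1..r - 1} (H - {x})"
      using ex_bij_betw_nat_finite_1[of "H - {x}"] by auto
    \<comment> \<open>Enumerate \<open>H\<close> with the focus last, so that the focus is never a deviant.\<close>
    have h_init: "bij_betw (h(r := x)) {1..r - 1} (H - {x})"
      using h by (rule bij_betw_cong[THEN iffD1, rotated]) (use assms in auto)
    moreover have "bij_betw (h(r := x)) {r} {x}" by (simp add: bij_betw_def)
    ultimately have "bij_betw (h(r := x)) ({1..r - 1} \<union> {r}) ((H - {x}) \<union> {x})"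
      by (rule bij_betw_combine) simp
    moreover have "{1..r - 1} \<union> {r} = {1..r}" "(H - {x}) \<union> {x} = H" using assms fin by auto
    ultimately have h': "bij_betw (h(r := x)) {1..r} H" by simp
    have "{A\<in>H. (i \<in> A) \<noteq> (i \<in> x)} \<subseteq> (h(r := x)) ` {1..r - 1}" for i
      using bij_betw_imp_surj_on[OF h_init] by blast
    then have "\<forall>i\<in>{1..n}. \<exists>b. card {A\<in>H. (i \<in> A) \<noteq> b} \<le> 1 \<and>
        {A\<in>H. (i \<in> A) \<noteq> b} \<subseteq> (h(r := x)) ` {1..r - 1}"
      using focal_family_deviants_le_1[OF ff] by blast
    then have "\<exists>p\<in>{1..n} \<rightarrow>\<^sub>E UNIV \<times> insert 0 {1..r - 1}. H = pattern_member n p ` {1..r}"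
      using ex_pattern_enumeration[OF h' _ _ H fin(1)] by simp
    moreover have "insert 0 {1..r - 1} = {0..r - 1}" by auto
    ultimately show ?thesis by simp
  qed
  then have "card {H. H \<subseteq> Pow {1..n} \<and> (\<exists>x. focal_family n r H x)} \<le> (2 * card {0..r - 1}) ^ n"
    by (intro card_le_patterns) auto
  then show ?thesis using assms by simp
qed

section \<open>Focal-free families\<close>

lemma focal_family_of_block_variants:
  fixes P Y :: "nat \<Rightarrow> nat set"
  assumes disjoint: "\<And>j l. j < k \<Longrightarrow> l < k \<Longrightarrow> j \<noteq> l \<Longrightarrow> P j \<inter> P l = {}"
    and Y: "\<And>j. j < k \<Longrightarrow> Y j \<noteq> x \<and> Y j - P j = x - P j"
  shows "focal_family n (Suc k) (insert x (Y ` {..<k})) x"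
proof -
  have agree: "(i \<in> Y j) \<longleftrightarrow> (i \<in> x)" if "j < k" "i \<notin> P j" for i j
    using Y[OF that(1)] that(2) by blast
  have "inj_on Y {..<k}"
  proof (rule inj_onI, rule ccontr)
    fix j l assume jl: "j \<in> {..<k}" "l \<in> {..<k}" "Y j = Y l" "j \<noteq> l"
    have "i \<in> Y j \<longleftrightarrow> i \<in> x" for i
      using agree[of j i] agree[of l i] disjoint[of j l] jl by auto
    then show False using Y[of j] jl by blast
  qed
  then have card_Y: "card (Y ` ({..<k} - J)) = card ({..<k} - J)" for J
    by (meson Diff_subset card_image inj_on_subset)
  have x_notin: "x \<notin> Y ` {..<k}" using Y by force
  have "card (insert x (Y ` {..<k})) = Suc k" using card_Y[of "{}"] x_notin by simp
  moreover have "k - 1 \<le> card {A\<in>insert x (Y ` {..<k}) - {x}. (i \<in> A) = (i \<in> x)}" for i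
  proof -
    define J where "J = {j. j < k \<and> i \<in> P j}"
    have "card J \<le> 1"
      using disjoint unfolding J_def by (auto simp: card_le_Suc0_iff_eq)
    then have "k - 1 \<le> card ({..<k} - J)"
      using diff_card_le_card_Diff[of J "{..<k}"] unfolding J_def by fastforce
    also have "\<dots> \<le> card {A\<in>insert x (Y ` {..<k}) - {x}. (i \<in> A) = (i \<in> x)}"
      unfolding card_Y[symmetric] using agree x_notin unfolding J_def
      by (intro card_mono) (auto simp: image_iff)
    finally show ?thesis .
  qed
  ultimately show ?thesis unfolding focal_family_def by auto
qed

lemma ex_block_determining_member:
  fixes P :: "nat \<Rightarrow> nat set"
  assumes no_focal: "\<not> contains_focal n r F" and "r \<ge> 1" and "x \<in> F"
    and disjoint: "\<And>j l. j < r - 1 \<Longrightarrow> l < r - 1 \<Longrightarrow> j \<noteq> l \<Longrightarrow> P j \<inter> P l = {}"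
  shows "\<exists>j<r - 1. \<forall>y\<in>F. y - P j = x - P j \<longrightarrow> y = x"
proof (rule ccontr)
  assume "\<not> ?thesis"
  then obtain Y where Y: "\<And>j. j < r - 1 \<Longrightarrow> Y j \<in> F \<and> Y j \<noteq> x \<and> Y j - P j = x - P j"
    by metis
  have "focal_family n (Suc (r - 1)) (insert x (Y ` {..<r - 1})) x"
  proof (rule focal_family_of_block_variants[where P = P])
    show "P j \<inter> P l = {}" if "j < r - 1" "l < r - 1" "j \<noteq> l" for j l
      by (rule disjoint[OF that])
    show "Y j \<noteq> x \<and> Y j - P j = x - P j" if "j < r - 1" for j
      using Y[OF that] by (rule conjunct2)
  qed
  then have "focal_family n r (insert x (Y ` {..<r - 1})) x" using \<open>r \<ge> 1\<close> by simp
  moreover have "insert x (Y ` {..<r - 1}) \<subseteq> F" using Y \<open>x \<in> F\<close> by blast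
  ultimately show False using no_focal unfolding contains_focal_def by blast
qed

lemma card_le_sum_blocks:
  fixes P :: "nat \<Rightarrow> 'a set"
  assumes "finite A" "F \<subseteq> Pow A" and P: "\<And>j. j < k \<Longrightarrow> P j \<subseteq> A"
    and determined: "\<forall>x\<in>F. \<exists>j<k. \<forall>y\<in>F. y - P j = x - P j \<longrightarrow> y = x"
  shows "card F \<le> (\<Sum>j<k. 2 ^ (card A - card (P j)))"
proof -
  obtain b where b: "\<forall>x\<in>F. b x < k \<and> (\<forall>y\<in>F. y - P (b x) = x - P (b x) \<longrightarrow> y = x)"
    using bchoice[OF determined] by blast
  have "inj_on (\<lambda>x. (b x, x - P (b x))) F"
    using b by (intro inj_onI) (metis prod.inject)
  then have "card F = card ((\<lambda>x. (b x, x - P (b x))) ` F)" by (simp add: card_image)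
  also have "\<dots> \<le> card (SIGMA j:{..<k}. Pow (A - P j))"
    using b assms(2) by (intro card_mono) (auto simp: \<open>finite A\<close>)
  also have "\<dots> = (\<Sum>j<k. card (Pow (A - P j)))"
    using \<open>finite A\<close> by (simp add: card_SigmaI)
  also have "\<dots> = (\<Sum>j<k. 2 ^ (card A - card (P j)))"
  proof (rule sum.cong[OF refl])
    fix j assume "j \<in> {..<k}"
    then have "P j \<subseteq> A" using P by simp
    moreover have "finite (P j)" using \<open>P j \<subseteq> A\<close> \<open>finite A\<close> by (rule finite_subset)
    ultimately show "card (Pow (A - P j)) = 2 ^ (card A - card (P j))"
      using \<open>finite A\<close> by (simp add: card_Pow card_Diff_subset)
  qed
  finally show ?thesis .
qed

lemma interval_block_index:
  fixes i j q :: nat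
  assumes "i \<in> {j * q + 1 .. (j + 1) * q}"
  shows "(i - 1) div q = j"
  using assms by (intro div_nat_eqI) (auto simp: mult.commute)

lemma card_focal_free_le:
  assumes "r \<ge> 2" "F \<subseteq> Pow {1..n}" "\<not> contains_focal n r F"
  shows "card F \<le> (r - 1) * 2 ^ (n - n div (r - 1))"
proof -
  define q where "q = n div (r - 1)"
  define P where "P j = {j * q + 1 .. (j + 1) * q}" for j
  have "(j + 1) * q \<le> n" if "j < r - 1" for j
  proof -
    have "(j + 1) * q \<le> (r - 1) * q" using that by (intro mult_le_mono1) simp
    then show ?thesis unfolding q_def by (metis div_times_less_eq_dividend mult.commute order_trans)
  qed
  then have blocks: "P j \<subseteq> {1..n}" if "j < r - 1" for j using that unfolding P_def by auto
  have "P j \<inter> P l = {}" if "j \<noteq> l" for j l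
    using interval_block_index that unfolding P_def by blast
  then have "\<forall>x\<in>F. \<exists>j<r - 1. \<forall>y\<in>F. y - P j = x - P j \<longrightarrow> y = x"
    using assms by (intro ballI ex_block_determining_member) auto
  then have "card F \<le> (\<Sum>j<r - 1. 2 ^ (card {1..n} - card (P j)))"
    using assms(2) blocks by (intro card_le_sum_blocks) auto
  also have "\<dots> = (r - 1) * 2 ^ (n - q)" unfolding P_def by simp
  finally show ?thesis unfolding q_def .
qed

lemma finite_card_families: "finite {card F | F. F \<subseteq> Pow {1..(n::nat)} \<and> P F}"
proof -
  have "{card F | F. F \<subseteq> Pow {1..n} \<and> P F} \<subseteq> card ` Pow (Pow {1..n})" by auto
  then show ?thesis by (rule finite_subset) simp
qed

lemma card_le_Max_card_families:
  "F \<subseteq> Pow {1..n} \<Longrightarrow> P F \<Longrightarrow> card F \<le> Max {card F | F. F \<subseteq> Pow {1..(n::nat)} \<and> P F}"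
  by (rule Max_ge[OF finite_card_families]) blast

lemma Max_card_families_le:
  assumes "P {}" and "\<And>F. F \<subseteq> Pow {1..n} \<Longrightarrow> P F \<Longrightarrow> card F \<le> k"
  shows "Max {card F | F. F \<subseteq> Pow {1..(n::nat)} \<and> P F} \<le> k"
  by (rule Max.boundedI[OF finite_card_families]) (use assms in auto)

lemma not_contains_if_card_less:
  assumes "finite F" "card F < r"
  shows "\<not> contains_near_sunflower n r F" "\<not> contains_focal n r F"
proof -
  have "card H < r" if "H \<subseteq> F" for H using card_mono[OF assms(1) that] assms(2) by simp
  then show "\<not> contains_near_sunflower n r F" "\<not> contains_focal n r F"
    unfolding contains_near_sunflower_def near_sunflower_def contains_focal_def focal_family_def
    by auto
qed

lemma g_ns_le_g_ff:
  assumes "r \<ge> 1"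
  shows "g_ns r n \<le> g_ff r n"
  unfolding g_ns_def
proof (rule Max_card_families_le)
  show "\<not> contains_near_sunflower n r {}" using not_contains_if_card_less assms by simp
  fix F assume "F \<subseteq> Pow {1..n}" "\<not> contains_near_sunflower n r F"
  then have "\<not> contains_focal n r F"
    unfolding contains_focal_def contains_near_sunflower_def
    using near_sunflower_if_focal_family by blast
  then show "card F \<le> g_ff r n"
    unfolding g_ff_def using \<open>F \<subseteq> Pow {1..n}\<close> by (rule card_le_Max_card_families[rotated])
qed

lemma g_ff_le:
  assumes "r \<ge> 2"
  shows "g_ff r n \<le> (r - 1) * 2 ^ (n - n div (r - 1))"
  unfolding g_ff_def
  using not_contains_if_card_less(2)[of "{}"] card_focal_free_le assms
  by (intro Max_card_families_le) auto

lemma g_ns_pos: "r \<ge> 2 \<Longrightarrow> g_ns r n \<ge> 1"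
  using card_le_Max_card_families[of "{{}}" n] not_contains_if_card_less(1)[of "{{}}" r n]
  unfolding g_ns_def by simp

lemma g_ff_pos: "r \<ge> 2 \<Longrightarrow> g_ff r n \<ge> 1"
  using card_le_Max_card_families[of "{{}}" n] not_contains_if_card_less(2)[of "{{}}" r n]
  unfolding g_ff_def by simp

lemma ex_large_family_avoiding:
  fixes bad :: "nat set set \<Rightarrow> bool"
  assumes card_bad: "\<And>H. bad H \<Longrightarrow> card H = r" and "r \<ge> 1" and "m \<le> 2 ^ n"
    and count: "card {H. H \<subseteq> Pow {1..n} \<and> bad H} \<le> K"
  shows "\<exists>F\<subseteq>Pow {1..n}. (\<forall>H\<subseteq>F. \<not> bad H) \<and> real m - real K * (real m / 2 ^ n) ^ r \<le> real (card F)"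
proof -
  obtain F where F: "F \<subseteq> Pow {1..n}" "\<forall>H\<in>{H. H \<subseteq> Pow {1..n} \<and> bad H}. \<not> H \<subseteq> F"
    and large: "real m - real (card {H. H \<subseteq> Pow {1..n} \<and> bad H}) * (real m / 2 ^ n) ^ r
      \<le> real (card F)"
    using ex_large_independent_set[of "Pow {1..n}" "{H. H \<subseteq> Pow {1..n} \<and> bad H}" r m] assms
    by (auto simp: card_Pow)
  have "real (card {H. H \<subseteq> Pow {1..n} \<and> bad H}) * (real m / 2 ^ n) ^ r \<le> real K * (real m / 2 ^ n) ^ r"
    using count by (intro mult_right_mono) simp_all
  moreover have "\<forall>H\<subseteq>F. \<not> bad H" using F by blast
  ultimately show ?thesis using F(1) large by (intro exI[of _ F]) simp
qed

lemma g_ns_deletion_bound: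
  assumes "r \<ge> 1" "m \<le> 2 ^ n"
  shows "real m - (2 * real (r + 1)) ^ n * (real m / 2 ^ n) ^ r \<le> real (g_ns r n)"
proof -
  obtain F where F: "F \<subseteq> Pow {1..n}" "\<forall>H\<subseteq>F. \<not> near_sunflower n r H"
    and "real m - real ((2 * (r + 1)) ^ n) * (real m / 2 ^ n) ^ r \<le> real (card F)"
    using ex_large_family_avoiding[OF _ assms card_near_sunflowers_le]
    unfolding near_sunflower_def by blast
  moreover have "card F \<le> g_ns r n"
    unfolding g_ns_def contains_near_sunflower_def using F by (intro card_le_Max_card_families) auto
  ultimately show ?thesis by simp
qed

lemma g_ff_deletion_bound:
  assumes "r \<ge> 1" "m \<le> 2 ^ n"
  shows "real m - (2 * real r) ^ n * (real m / 2 ^ n) ^ r \<le> real (g_ff r n)"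
proof -
  obtain F where F: "F \<subseteq> Pow {1..n}" "\<forall>H\<subseteq>F. \<not> (\<exists>x. focal_family n r H x)"
    and "real m - real ((2 * r) ^ n) * (real m / 2 ^ n) ^ r \<le> real (card F)"
    using ex_large_family_avoiding[OF _ assms card_focal_families_le[OF assms(1)]]
    unfolding focal_family_def by blast
  moreover have "card F \<le> g_ff r n"
    unfolding g_ff_def contains_focal_def using F by (intro card_le_Max_card_families) auto
  ultimately show ?thesis by simp
qed

lemma nat_ceiling_mult_div:
  fixes d n :: nat
  assumes "d > 0"
  shows "nat \<lceil>real ((d - 1) * n) / real d\<rceil> = n - n div d"
proof -
  have "real ((d - 1) * n) / real d = - (real n / real d) + of_int (int n)"
    using assms by (simp add: of_nat_diff field_simps)
  then have "\<lceil>real ((d - 1) * n) / real d\<rceil> = - \<lfloor>real n / real d\<rfloor> + int n"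
    by (simp only: ceiling_add_of_int ceiling_minus)
  also have "\<dots> = int n - int (n div d)"
    by (simp add: floor_divide_of_nat_eq)
  finally show ?thesis by (simp add: nat_diff_distrib)
qed

theorem theorem1p3:
  fixes r :: nat
  assumes "r \<ge> 3"
  shows "(\<forall>n\<ge>1. g_ns r n \<le> g_ff r n \<and>
            real (g_ff r n) \<le> real (r - 1) * 2 ^ nat \<lceil>real ((r - 2) * n) / real (r - 1)\<rceil>)
       \<and> (\<exists>c>0. \<forall>n\<ge>1. real (g_ns r n) \<ge> c * (2 / real (r + 1) powr (1 / real (r - 1))) ^ n)
       \<and> (\<exists>c>0. \<forall>n\<ge>1. real (g_ff r n) \<ge> c * (2 / real r powr (1 / real (r - 1))) ^ n)"
proof (intro conjI allI impI)
  fix n :: nat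
  show "g_ns r n \<le> g_ff r n" using g_ns_le_g_ff assms by simp
  have "r - 2 = (r - 1) - 1" "r - 1 > 0" using assms by auto
  then have "nat \<lceil>real ((r - 2) * n) / real (r - 1)\<rceil> = n - n div (r - 1)"
    using nat_ceiling_mult_div by presburger
  moreover have "real (g_ff r n) \<le> real ((r - 1) * 2 ^ (n - n div (r - 1)))"
    using g_ff_le[of r n] assms by (simp only: of_nat_le_iff)
  ultimately show "real (g_ff r n) \<le> real (r - 1) * 2 ^ nat \<lceil>real ((r - 2) * n) / real (r - 1)\<rceil>"
    by simp
next
  show "\<exists>c>0. \<forall>n\<ge>1. real (g_ns r n) \<ge> c * (2 / real (r + 1) powr (1 / real (r - 1))) ^ n"
    using assms by (intro exponential_lower_bound g_ns_pos g_ns_deletion_bound) auto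
next
  show "\<exists>c>0. \<forall>n\<ge>1. real (g_ff r n) \<ge> c * (2 / real r powr (1 / real (r - 1))) ^ n"
    using assms by (intro exponential_lower_bound g_ff_pos g_ff_deletion_bound) auto
qed

end
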